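(* Let $\lambda_1,\dots,\lambda_5$ be arbitrary integers and for variables $x_1,x_2,x_3$ let $A(x_1,x_2,x_3)$ be the $3\times 3$ matrix $[x_{ij}]$ with $x_{11}=x_1,\ x_{12}=x_2,\ x_{13}=x_3$, $x_{21}=-\lambda_3(\lambda_1-\lambda_2-\lambda_3+\lambda_5)x_2-\lambda_3(\lambda_2-\lambda_4)x_3$, $x_{22}=x_1+\lambda_1x_2+\lambda_2x_3$, $x_{23}=\lambda_3x_2+\lambda_3x_3$, $x_{31}=-\lambda_3(\lambda_2-\lambda_4)x_2+(-\lambda_1\lambda_4+\lambda_2^2-\lambda_2\lambda_5+\lambda_3\lambda_4)x_3$, $x_{32}=\lambda_2x_2+\lambda_4x_3$, $x_{33}=x_1+\lambda_3x_2+\lambda_5x_3$. Then for independent variables $x_i,y_i$, $$A(x_1,x_2,x_3)\,A(y_1,y_2,y_3)=A(z_1,z_2,z_3),$$ where $z_1=x_1y_1-\lambda_3(\lambda_1-\lambda_2-\lambda_3+\lambda_5)x_2y_2-\lambda_3(\lambda_2-\lambda_4)x_2y_3-\lambda_3(\lambda_2-\lambda_4)x_3y_2+(-\lambda_1\lambda_4+\lambda_2^2-\lambda_2\lambda_5+\lambda_3\lambda_4)x_3y_3$, $z_2=x_1y_2+x_2y_1+\lambda_1x_2y_2+\lambda_2x_2y_3+\lambda_2x_3y_2+\lambda_4x_3y_3$, $z_3=x_1y_3+\lambda_3x_2y_2+\lambda_3x_2y_3+x_3y_1+\lambda_3x_3y_2+\lambda_5x_3y_3$. Consequently the ternary cubic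 form $f(x_1,x_2,x_3)=\det A(x_1,x_2,x_3)$ satisfies $f(x_1,x_2,x_3)f(y_1,y_2,y_3)=f(z_1,z_2,z_3)$. *)

theory Defs
  imports "HOL-Analysis.Analysis"
begin

definition Amat :: "int \<Rightarrow> int \<Rightarrow> int \<Rightarrow> int \<Rightarrow> int \<Rightarrow>
    'a::comm_ring_1 \<Rightarrow> 'a \<Rightarrow> 'a \<Rightarrow> 'a^3^3" where
  "Amat l1 l2 l3 l4 l5 x1 x2 x3 = (let
      L1 = (of_int l1 :: 'a); L2 = of_int l2; L3 = of_int l3; L4 = of_int l4; L5 = of_int l5
    in vector [
      vector [x1, x2, x3],
      vector [- L3 * (L1 - L2 - L3 + L5) * x2 - L3 * (L2 - L4) * x3,
              x1 + L1 * x2 + L2 * x3,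
              L3 * x2 + L3 * x3],
      vector [- L3 * (L2 - L4) * x2 + (- L1 * L4 + L2^2 - L2 * L5 + L3 * L4) * x3,
              L2 * x2 + L4 * x3,
              x1 + L3 * x2 + L5 * x3]])"

end

theory Submission
  imports Defs
begin

text \<open>\<open>Amat l1 \<dots> l5 x1 x2 x3\<close> is the matrix of multiplication by \<open>x1 + x2 e2 + x3 e3\<close> in a
  commutative rank-3 algebra with basis \<open>1, e2, e3\<close>, so these matrices are closed under
  products (checked entrywise by ring normalisation); the composition law for
  \<open>det \<circ> Amat\<close> is then multiplicativity of the determinant.\<close>

lemma Amat_mult:
  fixes l1 l2 l3 l4 l5 :: int and x1 x2 x3 y1 y2 y3 :: "'a::comm_ring_1"
  defines "L1 \<equiv> (of_int l1 :: 'a)" and "L2 \<equiv> (of_int l2 :: 'a)" and "L3 \<equiv> (of_int l3 :: 'a)"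
    and "L4 \<equiv> (of_int l4 :: 'a)" and "L5 \<equiv> (of_int l5 :: 'a)"
  shows "Amat l1 l2 l3 l4 l5 x1 x2 x3 ** Amat l1 l2 l3 l4 l5 y1 y2 y3 =
    Amat l1 l2 l3 l4 l5
      (x1 * y1 - L3 * (L1 - L2 - L3 + L5) * x2 * y2 - L3 * (L2 - L4) * x2 * y3
        - L3 * (L2 - L4) * x3 * y2 + (- L1 * L4 + L2^2 - L2 * L5 + L3 * L4) * x3 * y3)
      (x1 * y2 + x2 * y1 + L1 * x2 * y2 + L2 * x2 * y3 + L2 * x3 * y2 + L4 * x3 * y3)
      (x1 * y3 + L3 * x2 * y2 + L3 * x2 * y3 + x3 * y1 + L3 * x3 * y2 + L5 * x3 * y3)"
  unfolding Amat_def Let_def L1_def L2_def L3_def L4_def L5_def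
  by (simp add: vec_eq_iff forall_3 matrix_matrix_mult_def sum_3 vector_3
      algebra_simps power2_eq_square)

theorem mainTheorem2:
  fixes l1 l2 l3 l4 l5 :: int
    and x1 x2 x3 y1 y2 y3 :: "'a::comm_ring_1"
  defines "L1 \<equiv> (of_int l1 :: 'a)" and "L2 \<equiv> (of_int l2 :: 'a)" and "L3 \<equiv> (of_int l3 :: 'a)"
    and "L4 \<equiv> (of_int l4 :: 'a)" and "L5 \<equiv> (of_int l5 :: 'a)"
  defines "z1 \<equiv> x1 * y1 - L3 * (L1 - L2 - L3 + L5) * x2 * y2 - L3 * (L2 - L4) * x2 * y3
                 - L3 * (L2 - L4) * x3 * y2 + (- L1 * L4 + L2^2 - L2 * L5 + L3 * L4) * x3 * y3"
    and "z2 \<equiv> x1 * y2 + x2 * y1 + L1 * x2 * y2 + L2 * x2 * y3 + L2 * x3 * y2 + L4 * x3 * y3"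
    and "z3 \<equiv> x1 * y3 + L3 * x2 * y2 + L3 * x2 * y3 + x3 * y1 + L3 * x3 * y2 + L5 * x3 * y3"
  shows "Amat l1 l2 l3 l4 l5 x1 x2 x3 ** Amat l1 l2 l3 l4 l5 y1 y2 y3 = Amat l1 l2 l3 l4 l5 z1 z2 z3
       \<and> det (Amat l1 l2 l3 l4 l5 x1 x2 x3) * det (Amat l1 l2 l3 l4 l5 y1 y2 y3)
           = det (Amat l1 l2 l3 l4 l5 z1 z2 z3)"
proof -
  have product: "Amat l1 l2 l3 l4 l5 x1 x2 x3 ** Amat l1 l2 l3 l4 l5 y1 y2 y3
      = Amat l1 l2 l3 l4 l5 z1 z2 z3"
    unfolding z1_def z2_def z3_def L1_def L2_def L3_def L4_def L5_def by (rule Amat_mult)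
  then show ?thesis by (metis det_mul)
qed

end
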